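(* Let $\gamma>0$, let $\mathcal F=\{f_\vartheta:\mathcal X\to[-1,1]:\vartheta\in\Theta\}$ be a class of functions with parameter space $\Theta$, $\mathcal D$ a probability distribution over $\mathcal X$ and $\mu$ a probability measure over $\Theta$. For $\phi,\vartheta\in\Theta$ let $l^\phi(\vartheta)=\frac12\mathbb E_{x\sim\mathcal D}[(f_\phi(x)-f_\vartheta(x))^2]$. Then for every $\vartheta\in\Theta$, $$\mathrm{Var}_{\phi\sim\mu}[l^\phi(\vartheta)]\le4\sqrt{\mathrm{Var}_{\phi\sim\mu}[f_\phi]}\le4\sqrt{\mathbb E_{\phi\sim\mu,\,x\sim\mathcal D}[f_\phi(x)^2]},$$ where $\mathrm{Var}_{\phi\sim\mu}[f_\phi]=\mathbb E_{\phi\sim\mu}[\langle f_\phi,f_\phi\rangle_{\mathcal D}]-\langle\mathbb E_{\phi\sim\mu}[f_\phi],\mathbb E_{\phi\sim\mu}[f_\phi]\rangle_{\mathcal D}$.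
   Context: $\langle f,g\rangle_{\mathcal D}=\mathbb E_{x\sim\mathcal D}[f(x)g(x)]$ is the $L^2(\mathcal D)$ inner product; $\mathbb E_{\phi\sim\mu}[f_\phi]$ denotes the pointwise mean function $x\mapsto\mathbb E_{\phi\sim\mu}[f_\phi(x)]$. *)

theory Defs
  imports "HOL-Probability.Probability"
begin

definition sq_loss :: "'x measure \<Rightarrow> ('p \<Rightarrow> 'x \<Rightarrow> real) \<Rightarrow> 'p \<Rightarrow> 'p \<Rightarrow> real" where
  "sq_loss D f phi theta = (1/2) * (\<integral>x. (f phi x - f theta x)^2 \<partial>D)"

definition var_of :: "'p measure \<Rightarrow> ('p \<Rightarrow> real) \<Rightarrow> real" where
  "var_of mu g = (\<integral>phi. (g phi - (\<integral>psi. g psi \<partial>mu))^2 \<partial>mu)"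

definition inner_L2 :: "'x measure \<Rightarrow> ('x \<Rightarrow> real) \<Rightarrow> ('x \<Rightarrow> real) \<Rightarrow> real" where
  "inner_L2 D g h = (\<integral>x. g x * h x \<partial>D)"

definition mean_fun :: "'p measure \<Rightarrow> ('p \<Rightarrow> 'x \<Rightarrow> real) \<Rightarrow> 'x \<Rightarrow> real" where
  "mean_fun mu f = (\<lambda>x. \<integral>phi. f phi x \<partial>mu)"

definition var_class :: "'p measure \<Rightarrow> 'x measure \<Rightarrow> ('p \<Rightarrow> 'x \<Rightarrow> real) \<Rightarrow> real" where
  "var_class mu D f = (\<integral>phi. inner_L2 D (f phi) (f phi) \<partial>mu)
                       - inner_L2 D (mean_fun mu f) (mean_fun mu f)"

end

theory Submission
  imports Defs
begin

text \<open>
  Fix \<open>\<theta>\<close>, let \<open>m\<close> be the mean function and \<open>c = 1/2 \<parallel>m - f\<^sub>\<theta>\<parallel>\<^sup>2\<close>.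
  By the difference of squares, \<open>l\<^sup>\<phi>(\<theta>) - c = 1/2 \<langle>f\<^sub>\<phi> - m, f\<^sub>\<phi> + m - 2 f\<^sub>\<theta>\<rangle>\<close>, and since all
  functions take values in \<open>[-1,1]\<close> this is at most \<open>2 \<parallel>f\<^sub>\<phi> - m\<parallel>\<^sub>1 \<le> 2 \<parallel>f\<^sub>\<phi> - m\<parallel>\<^sub>2\<close> in absolute
  value. As the variance is the least mean squared deviation from a constant,
  \<open>Var[l\<^sup>\<phi>(\<theta>)] \<le> 4 E\<^sub>\<phi> \<parallel>f\<^sub>\<phi> - m\<parallel>\<^sup>2\<close>, and by Fubini the right-hand side is \<open>4 Var[f\<^sub>\<phi>]\<close>.
  Finally \<open>Var[f\<^sub>\<phi>] \<le> E f\<^sup>2 \<le> 1\<close>, so \<open>Var[f\<^sub>\<phi>] \<le> \<surd>Var[f\<^sub>\<phi>]\<close>.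
\<close>

lemma (in finite_measure) integrable_abs_le:
  fixes X :: "'a \<Rightarrow> real"
  assumes "X \<in> borel_measurable M" and "\<And>x. x \<in> space M \<Longrightarrow> \<bar>X x\<bar> \<le> B"
  shows "integrable M X"
  using assms by (intro integrable_const_bound[where B=B]) (auto intro!: AE_I2)

lemma (in finite_measure) integrable_square_abs_le:
  fixes X :: "'a \<Rightarrow> real"
  assumes "X \<in> borel_measurable M" and "\<And>x. x \<in> space M \<Longrightarrow> \<bar>X x\<bar> \<le> B"
  shows "integrable M (\<lambda>x. (X x)\<^sup>2)"
proof (rule integrable_abs_le)
  fix x assume "x \<in> space M"
  then have "\<bar>X x\<bar> \<le> \<bar>B\<bar>" using assms(2) by fastforce
  then show "\<bar>(X x)\<^sup>2\<bar> \<le> B\<^sup>2" by (simp add: abs_le_square_iff)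
qed (use assms(1) in measurable)

lemma (in prob_space) abs_expectation_le:
  fixes X :: "'a \<Rightarrow> real"
  assumes "X \<in> borel_measurable M" and "\<And>x. x \<in> space M \<Longrightarrow> \<bar>X x\<bar> \<le> B"
  shows "\<bar>expectation X\<bar> \<le> B"
proof -
  have "\<bar>expectation X\<bar> \<le> expectation (\<lambda>x. \<bar>X x\<bar>)"
    by (rule integral_abs_bound)
  also have "\<dots> \<le> B"
    using assms by (intro integral_le_const integrable_abs_le) (auto intro!: AE_I2)
  finally show ?thesis .
qed

lemma (in prob_space) square_expectation_le:
  fixes X :: "'a \<Rightarrow> real"
  assumes "integrable M X" and "integrable M (\<lambda>x. (X x)\<^sup>2)"
  shows "(expectation X)\<^sup>2 \<le> expectation (\<lambda>x. (X x)\<^sup>2)"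
  using variance_eq[OF assms] variance_positive[of X] by simp

lemma (in prob_space) variance_le_mean_square_deviation:
  fixes X :: "'a \<Rightarrow> real"
  assumes "integrable M X" and "integrable M (\<lambda>x. (X x)\<^sup>2)"
  shows "variance X \<le> expectation (\<lambda>x. (X x - c)\<^sup>2)"
proof -
  have "expectation (\<lambda>x. (X x - c)\<^sup>2) = variance X + (expectation X - c)\<^sup>2"
    using assms by (simp add: variance_eq power2_diff power2_eq_square prob_space algebra_simps)
  then show ?thesis by simp
qed

lemma (in prob_space) half_sq_dist_le_2:
  fixes u w :: "'a \<Rightarrow> real"
  assumes [measurable]: "u \<in> borel_measurable M" "w \<in> borel_measurable M"
    and bounded: "\<And>x. x \<in> space M \<Longrightarrow> \<bar>u x\<bar> \<le> 1 \<and> \<bar>w x\<bar> \<le> 1"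
  shows "\<bar>(1/2) * expectation (\<lambda>x. (u x - w x)\<^sup>2)\<bar> \<le> 2"
proof -
  have "\<bar>expectation (\<lambda>x. (u x - w x)\<^sup>2)\<bar> \<le> 4"
  proof (rule abs_expectation_le)
    fix x assume "x \<in> space M"
    then have "\<bar>u x - w x\<bar> \<le> \<bar>2\<bar>"
      using bounded by fastforce
    then have "(u x - w x)\<^sup>2 \<le> 2\<^sup>2"
      by (rule power2_mono)
    then show "\<bar>(u x - w x)\<^sup>2\<bar> \<le> 4"
      by simp
  qed measurable
  then show ?thesis
    by simp
qed

lemma (in finite_measure) integrable_square_diff:
  fixes u w :: "'a \<Rightarrow> real"
  assumes [measurable]: "u \<in> borel_measurable M" "w \<in> borel_measurable M"
    and bounded: "\<And>x. x \<in> space M \<Longrightarrow> \<bar>u x\<bar> \<le> 1 \<and> \<bar>w x\<bar> \<le> 1"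
  shows "integrable M (\<lambda>x. (u x - w x)\<^sup>2)"
proof (rule integrable_square_abs_le[where B=2])
  show "\<bar>u x - w x\<bar> \<le> 2" if "x \<in> space M" for x
    using bounded[OF that] by linarith
qed measurable

lemma (in prob_space) abs_expectation_mult_le:
  fixes d s :: "'a \<Rightarrow> real"
  assumes [measurable]: "d \<in> borel_measurable M" "s \<in> borel_measurable M"
    and d_le: "\<And>x. x \<in> space M \<Longrightarrow> \<bar>d x\<bar> \<le> A"
    and s_le: "\<And>x. x \<in> space M \<Longrightarrow> \<bar>s x\<bar> \<le> B"
  shows "\<bar>expectation (\<lambda>x. d x * s x)\<bar> \<le> B * expectation (\<lambda>x. \<bar>d x\<bar>)"
proof -
  have ds_le: "\<bar>d x * s x\<bar> \<le> B * \<bar>d x\<bar>" if "x \<in> space M" for x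
    using mult_left_mono[OF s_le[OF that] abs_ge_zero[of "d x"]] by (simp add: abs_mult mult.commute)
  have "\<bar>expectation (\<lambda>x. d x * s x)\<bar> \<le> expectation (\<lambda>x. \<bar>d x * s x\<bar>)"
    by (rule integral_abs_bound)
  also have "\<dots> \<le> expectation (\<lambda>x. B * \<bar>d x\<bar>)"
  proof (rule integral_mono)
    show "integrable M (\<lambda>x. B * \<bar>d x\<bar>)"
      using d_le by (intro integrable_mult_right integrable_abs_le[where B=A]) auto
    then show "integrable M (\<lambda>x. \<bar>d x * s x\<bar>)"
      by (rule Bochner_Integration.integrable_bound)
        (auto intro!: AE_I2 intro: order_trans[OF ds_le] abs_ge_self)
  qed (rule ds_le)
  finally show ?thesis
    by simp
qed

lemma (in prob_space) half_sq_dist_difference_square_le: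
  fixes u v w :: "'a \<Rightarrow> real"
  assumes [measurable]: "u \<in> borel_measurable M" "v \<in> borel_measurable M" "w \<in> borel_measurable M"
    and bounded: "\<And>x. x \<in> space M \<Longrightarrow> \<bar>u x\<bar> \<le> 1 \<and> \<bar>v x\<bar> \<le> 1 \<and> \<bar>w x\<bar> \<le> 1"
  shows "((1/2) * expectation (\<lambda>x. (u x - w x)\<^sup>2) - (1/2) * expectation (\<lambda>x. (v x - w x)\<^sup>2))\<^sup>2
    \<le> 4 * expectation (\<lambda>x. (u x - v x)\<^sup>2)"
proof -
  have d_le: "\<bar>u x - v x\<bar> \<le> 2" and s_le: "\<bar>u x + v x - 2 * w x\<bar> \<le> 4" if "x \<in> space M" for x
    using bounded[OF that] by linarith+
  have "expectation (\<lambda>x. (u x - w x)\<^sup>2) - expectation (\<lambda>x. (v x - w x)\<^sup>2)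
      = expectation (\<lambda>x. (u x - w x)\<^sup>2 - (v x - w x)\<^sup>2)"
    using bounded by (intro Bochner_Integration.integral_diff[symmetric] integrable_square_diff) auto
  also have "\<dots> = expectation (\<lambda>x. (u x - v x) * (u x + v x - 2 * w x))"
    by (simp add: power2_eq_square algebra_simps)
  also have "\<bar>\<dots>\<bar> \<le> 4 * expectation (\<lambda>x. \<bar>u x - v x\<bar>)"
    by (rule abs_expectation_mult_le[where A=2]) (measurable, measurable, fact d_le, fact s_le)
  finally have "\<bar>expectation (\<lambda>x. (u x - w x)\<^sup>2) - expectation (\<lambda>x. (v x - w x)\<^sup>2)\<bar>
      \<le> 4 * expectation (\<lambda>x. \<bar>u x - v x\<bar>)" .
  then have "((1/2) * expectation (\<lambda>x. (u x - w x)\<^sup>2) - (1/2) * expectation (\<lambda>x. (v x - w x)\<^sup>2))\<^sup>2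
      \<le> (2 * expectation (\<lambda>x. \<bar>u x - v x\<bar>))\<^sup>2"
    by (intro power2_mono) (simp add: right_diff_distrib[symmetric] abs_mult)
  also have "\<dots> = 4 * (expectation (\<lambda>x. \<bar>u x - v x\<bar>))\<^sup>2"
    by (simp add: power_mult_distrib)
  also have "\<dots> \<le> 4 * expectation (\<lambda>x. \<bar>u x - v x\<bar>\<^sup>2)"
  proof (intro mult_left_mono square_expectation_le)
    show "integrable M (\<lambda>x. \<bar>u x - v x\<bar>)" "integrable M (\<lambda>x. \<bar>u x - v x\<bar>\<^sup>2)"
      using d_le by (auto intro!: integrable_abs_le integrable_square_abs_le)
  qed simp
  finally show ?thesis
    by simp
qed

locale bounded_function_family = pair_prob_space \<mu> D
  for \<mu> :: "'p measure" and D :: "'x measure" +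
  fixes f :: "'p \<Rightarrow> 'x \<Rightarrow> real"
  assumes measurable_uncurried [measurable]: "(\<lambda>(\<phi>, x). f \<phi> x) \<in> borel_measurable (\<mu> \<Otimes>\<^sub>M D)"
    and abs_le_1: "\<And>\<phi> x. \<phi> \<in> space \<mu> \<Longrightarrow> x \<in> space D \<Longrightarrow> \<bar>f \<phi> x\<bar> \<le> 1"
begin

lemma measurable_section_fst: "\<phi> \<in> space \<mu> \<Longrightarrow> f \<phi> \<in> borel_measurable D"
  using measurable_compose[OF measurable_Pair1' measurable_uncurried] by simp

lemma measurable_section_snd: "x \<in> space D \<Longrightarrow> (\<lambda>\<phi>. f \<phi> x) \<in> borel_measurable \<mu>"
  using measurable_compose[OF measurable_Pair2' measurable_uncurried] by simp

lemma measurable_mean_fun [measurable]: "mean_fun \<mu> f \<in> borel_measurable D"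
  unfolding mean_fun_def by measurable

lemma abs_mean_fun_le_1: "x \<in> space D \<Longrightarrow> \<bar>mean_fun \<mu> f x\<bar> \<le> 1"
  unfolding mean_fun_def
  using measurable_section_snd abs_le_1 by (intro M1.abs_expectation_le) auto

lemma integrable_square_uncurried: "integrable (\<mu> \<Otimes>\<^sub>M D) (\<lambda>(\<phi>, x). (f \<phi> x)\<^sup>2)"
proof (rule P.integrable_abs_le[where B=1])
  show "\<bar>case z of (\<phi>, x) \<Rightarrow> (f \<phi> x)\<^sup>2\<bar> \<le> 1" if "z \<in> space (\<mu> \<Otimes>\<^sub>M D)" for z
    using that by (auto simp: space_pair_measure abs_square_le_1 intro: abs_le_1)
qed measurable

lemma second_moment_le_1: "(\<integral>z. (case z of (\<phi>, x) \<Rightarrow> (f \<phi> x)\<^sup>2) \<partial>(\<mu> \<Otimes>\<^sub>M D)) \<le> 1"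
  using integrable_square_uncurried
  by (intro P.integral_le_const AE_I2) (auto simp: space_pair_measure abs_square_le_1 intro: abs_le_1)

lemma var_class_eq_second_moment_diff:
  "var_class \<mu> D f = (\<integral>z. (case z of (\<phi>, x) \<Rightarrow> (f \<phi> x)\<^sup>2) \<partial>(\<mu> \<Otimes>\<^sub>M D))
    - inner_L2 D (mean_fun \<mu> f) (mean_fun \<mu> f)"
  unfolding var_class_def inner_L2_def
  using integral_fst[OF integrable_square_uncurried] by (simp add: power2_eq_square)

lemma var_class_le_second_moment:
  "var_class \<mu> D f \<le> (\<integral>z. (case z of (\<phi>, x) \<Rightarrow> (f \<phi> x)\<^sup>2) \<partial>(\<mu> \<Otimes>\<^sub>M D))"
  unfolding var_class_eq_second_moment_diff inner_L2_def by simp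

lemma integrable_sq_deviation:
  "integrable (\<mu> \<Otimes>\<^sub>M D) (\<lambda>(\<phi>, x). (f \<phi> x - mean_fun \<mu> f x)\<^sup>2)"
proof (rule P.integrable_abs_le[where B=4])
  fix z assume "z \<in> space (\<mu> \<Otimes>\<^sub>M D)"
  then obtain \<phi> x where z: "z = (\<phi>, x)" "\<phi> \<in> space \<mu>" "x \<in> space D"
    by (auto simp: space_pair_measure)
  have "\<bar>f \<phi> x - mean_fun \<mu> f x\<bar> \<le> \<bar>2\<bar>"
    using abs_le_1[OF z(2,3)] abs_mean_fun_le_1[OF z(3)] by linarith
  then have "(f \<phi> x - mean_fun \<mu> f x)\<^sup>2 \<le> 2\<^sup>2"
    by (rule power2_mono)
  then show "\<bar>case z of (\<phi>, x) \<Rightarrow> (f \<phi> x - mean_fun \<mu> f x)\<^sup>2\<bar> \<le> 4"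
    unfolding z by simp
qed measurable

lemma var_class_eq_expected_sq_dist:
  "var_class \<mu> D f = (\<integral>\<phi>. (\<integral>x. (f \<phi> x - mean_fun \<mu> f x)\<^sup>2 \<partial>D) \<partial>\<mu>)"
proof -
  let ?m = "mean_fun \<mu> f"
  have pointwise_variance:
    "(\<integral>\<phi>. (f \<phi> x - ?m x)\<^sup>2 \<partial>\<mu>) = (\<integral>\<phi>. (f \<phi> x)\<^sup>2 \<partial>\<mu>) - (?m x)\<^sup>2" if "x \<in> space D" for x
  proof -
    have "integrable \<mu> (\<lambda>\<phi>. f \<phi> x)" "integrable \<mu> (\<lambda>\<phi>. (f \<phi> x)\<^sup>2)"
      using measurable_section_snd[OF that] abs_le_1[OF _ that]
      by (auto intro: M1.integrable_abs_le M1.integrable_square_abs_le[where B=1])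
    then show ?thesis
      using M1.variance_eq[of "\<lambda>\<phi>. f \<phi> x"] by (simp add: mean_fun_def)
  qed
  have integrable_mean_square: "integrable D (\<lambda>x. (?m x)\<^sup>2)"
    using abs_mean_fun_le_1 by (intro M2.integrable_square_abs_le) auto
  have "(\<integral>\<phi>. (\<integral>x. (f \<phi> x - ?m x)\<^sup>2 \<partial>D) \<partial>\<mu>) = (\<integral>x. (\<integral>\<phi>. (f \<phi> x - ?m x)\<^sup>2 \<partial>\<mu>) \<partial>D)"
    using Fubini_integral[OF integrable_sq_deviation] by simp
  also have "\<dots> = (\<integral>x. (\<integral>\<phi>. (f \<phi> x)\<^sup>2 \<partial>\<mu>) - (?m x)\<^sup>2 \<partial>D)"
    by (rule Bochner_Integration.integral_cong) (simp_all add: pointwise_variance)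
  also have "\<dots> = (\<integral>x. (\<integral>\<phi>. (f \<phi> x)\<^sup>2 \<partial>\<mu>) \<partial>D) - (\<integral>x. (?m x)\<^sup>2 \<partial>D)"
    using integrable_snd[OF integrable_square_uncurried] integrable_mean_square by simp
  also have "(\<integral>x. (\<integral>\<phi>. (f \<phi> x)\<^sup>2 \<partial>\<mu>) \<partial>D) = (\<integral>z. (case z of (\<phi>, x) \<Rightarrow> (f \<phi> x)\<^sup>2) \<partial>(\<mu> \<Otimes>\<^sub>M D))"
    using integral_snd[OF integrable_square_uncurried] by simp
  finally show ?thesis
    unfolding var_class_eq_second_moment_diff inner_L2_def by (simp add: power2_eq_square)
qed

lemma var_class_nonneg: "0 \<le> var_class \<mu> D f"
  unfolding var_class_eq_expected_sq_dist by (intro Bochner_Integration.integral_nonneg) simp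

lemma var_of_sq_loss_le:
  assumes \<theta>: "\<theta> \<in> space \<mu>"
  shows "var_of \<mu> (\<lambda>\<phi>. sq_loss D f \<phi> \<theta>) \<le> 4 * var_class \<mu> D f"
proof -
  let ?m = "mean_fun \<mu> f"
  let ?l = "\<lambda>\<phi>. sq_loss D f \<phi> \<theta>"
  define c where "c = (1/2) * (\<integral>x. (?m x - f \<theta> x)\<^sup>2 \<partial>D)"
  note [measurable] = measurable_section_fst[OF \<theta>]
  have bounded: "\<bar>f \<phi> x\<bar> \<le> 1 \<and> \<bar>f \<theta> x\<bar> \<le> 1 \<and> \<bar>?m x\<bar> \<le> 1"
    if "\<phi> \<in> space \<mu>" "x \<in> space D" for \<phi> x
    using abs_le_1 abs_mean_fun_le_1 \<theta> that by blast
  have [measurable]: "?l \<in> borel_measurable \<mu>"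
    unfolding sq_loss_def by measurable
  have abs_l_le: "\<bar>?l \<phi>\<bar> \<le> 2" if "\<phi> \<in> space \<mu>" for \<phi>
    unfolding sq_loss_def
    using measurable_section_fst[OF that] bounded[OF that]
    by (intro M2.half_sq_dist_le_2) auto
  have abs_c_le: "\<bar>c\<bar> \<le> 2"
    unfolding c_def using bounded[OF \<theta>] by (intro M2.half_sq_dist_le_2) auto
  have "var_of \<mu> ?l \<le> (\<integral>\<phi>. (?l \<phi> - c)\<^sup>2 \<partial>\<mu>)"
    unfolding var_of_def using abs_l_le
    by (intro M1.variance_le_mean_square_deviation M1.integrable_abs_le
        M1.integrable_square_abs_le[where B=2]) auto
  also have "\<dots> \<le> (\<integral>\<phi>. 4 * (\<integral>x. (f \<phi> x - ?m x)\<^sup>2 \<partial>D) \<partial>\<mu>)"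
  proof (rule integral_mono)
    show "integrable \<mu> (\<lambda>\<phi>. (?l \<phi> - c)\<^sup>2)"
    proof (rule M1.integrable_square_abs_le[where B=4])
      show "\<bar>?l \<phi> - c\<bar> \<le> 4" if "\<phi> \<in> space \<mu>" for \<phi>
        using abs_l_le[OF that] abs_c_le by linarith
    qed measurable
    show "integrable \<mu> (\<lambda>\<phi>. 4 * (\<integral>x. (f \<phi> x - ?m x)\<^sup>2 \<partial>D))"
      using integrable_fst[OF integrable_sq_deviation] by simp
    show "(?l \<phi> - c)\<^sup>2 \<le> 4 * (\<integral>x. (f \<phi> x - ?m x)\<^sup>2 \<partial>D)" if "\<phi> \<in> space \<mu>" for \<phi>
      unfolding sq_loss_def c_def
      using measurable_section_fst[OF that] bounded[OF that]
      by (intro M2.half_sq_dist_difference_square_le) auto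
  qed
  also have "\<dots> = 4 * var_class \<mu> D f"
    unfolding var_class_eq_expected_sq_dist by simp
  finally show ?thesis .
qed

end

theorem mainTheorem14:
  fixes mu :: "'p measure" and D :: "'x measure" and f :: "'p \<Rightarrow> 'x \<Rightarrow> real"
    and gamma :: real and theta :: 'p
  assumes "gamma > 0"
    and "prob_space mu" and "prob_space D"
    and "(\<lambda>(phi, x). f phi x) \<in> borel_measurable (mu \<Otimes>\<^sub>M D)"
    and "\<And>phi x. phi \<in> space mu \<Longrightarrow> x \<in> space D \<Longrightarrow> f phi x \<in> {-1..1}"
    and "theta \<in> space mu"
  shows "var_of mu (\<lambda>phi. sq_loss D f phi theta) \<le> 4 * sqrt (var_class mu D f)
       \<and> 4 * sqrt (var_class mu D f) \<le> 4 * sqrt (\<integral>z. (case z of (phi, x) \<Rightarrow> (f phi x)^2) \<partial>(mu \<Otimes>\<^sub>M D))"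
proof -
  have "bounded_function_family mu D f"
    unfolding bounded_function_family_def bounded_function_family_axioms_def
      pair_prob_space_def pair_sigma_finite_def
    using assms(2-5) by (auto simp: prob_space_imp_sigma_finite abs_le_iff)
  then interpret bounded_function_family mu D f .
  let ?V = "var_class mu D f"
  have "?V \<le> 1"
    using var_class_le_second_moment second_moment_le_1 by linarith
  then have "?V \<le> sqrt ?V"
    using var_class_nonneg mult_left_le[of "sqrt ?V" "sqrt ?V"] by simp
  then have "var_of mu (\<lambda>phi. sq_loss D f phi theta) \<le> 4 * sqrt ?V"
    using var_of_sq_loss_le[OF assms(6)] by linarith
  moreover have "sqrt ?V \<le> sqrt (\<integral>z. (case z of (phi, x) \<Rightarrow> (f phi x)^2) \<partial>(mu \<Otimes>\<^sub>M D))"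
    using var_class_le_second_moment by simp
  ultimately show ?thesis
    by simp
qed

end
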